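(* Let $(X,T,Y)$ be a random triple as described in the context, let $\psi$ be a score variable satisfying Assumption 1, and let $\mathcal G=\{g_\theta:\theta\in\Theta\}$ be a parametrized class of utility functions. Suppose the policy class is correctly specified for the surrogate loss, in the sense that $$\mathcal G\cap\Big(\operatorname*{argmin}_{g\ \text{unconstrained}}\mathbb E\big[|\psi|\, l(g(X),\operatorname{sign}(\psi))\big]\Big)\neq\varnothing,$$ where the argmin ranges over all measurable functions $g:\mathcal X\to\mathbb R$. Then every minimizer of the surrogate-loss risk is an optimal policy: for all $\theta^*\in\operatorname*{argmin}_{\theta\in\Theta}L(\theta)$, $$J(\theta^* )=\max_{\pi\ \text{unconstrained}}J(\pi),$$ where the maximum ranges over all measurable policies $\pi:\mathcal X\to\{-1,+1\}$.
   Context: $X$ is a context taking values in a space $\mathcal X$, $T\in\{-1,1\}$ is a treatment, $Y\in\mathbb R$ is an outcome, and $Y(-1),Y(1)$ are potential outcomes with $Y=Y(T)$ and $Y(t)\perp T\mid X$ for each $t$. A score variable $\psi$ is a real-valued random variable depending on observables. Assumption 1: $\mathbb E[\psi\mid X]=\mathbb E[Y(1)-Y(-1)\mid X]$ almost surely and $\mathbb E[|\psi|]<\infty$. For a policy $\pi:\mathcal X\to\{-1,+1\}$, $J(\pi)=\mathbb E[\pi(X)(Y(1)-Y(-1))]$. $\Theta\subseteq\mathbb R^d$, each $g_\theta:\mathcal X\to\mathbb R$ is measurable, and $J(\theta)=J(\operatorname{sign}(g_\theta(\cdot)))=\mathbb E[\operatorname{sign}(g_\theta(X))(Y(1)-Y(-1))]$.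 The surrogate (logistic) loss is $l(g,s)=2\log(1+\exp(g))-(s+1)g$ for $g\in\mathbb R$, $s\in\{-1,1\}$, and the population surrogate risk is $L(\theta)=\mathbb E[|\psi|\, l(g_\theta(X),\operatorname{sign}(\psi))]$. *)

theory Defs
  imports "HOL-Probability.Probability"
begin

definition sgnpm :: "real \<Rightarrow> real" where
  "sgnpm x = (if x \<ge> 0 then 1 else -1)"

definition surr_loss :: "real \<Rightarrow> real \<Rightarrow> real" where
  "surr_loss g s = 2 * ln (1 + exp g) - (s + 1) * g"

definition sigmaX :: "'w measure \<Rightarrow> ('w \<Rightarrow> 'x) \<Rightarrow> 'x measure \<Rightarrow> 'w measure" where
  "sigmaX M X Sx = vimage_algebra (space M) X Sx"

definition cond_indep :: "'w measure \<Rightarrow> 'w measure \<Rightarrow> ('w \<Rightarrow> real) \<Rightarrow> ('w \<Rightarrow> real) \<Rightarrow> bool" where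
  "cond_indep M F U V \<longleftrightarrow>
     (\<forall>A\<in>sets borel. \<forall>B\<in>sets borel. AE w in M.
        real_cond_exp M F (\<lambda>w. indicator A (U w) * indicator B (V w)) w =
        real_cond_exp M F (\<lambda>w. indicator A (U w)) w * real_cond_exp M F (\<lambda>w. indicator B (V w)) w)"

definition Jpol :: "'w measure \<Rightarrow> ('w \<Rightarrow> 'x) \<Rightarrow> ('w \<Rightarrow> real) \<Rightarrow> ('w \<Rightarrow> real) \<Rightarrow> ('x \<Rightarrow> real) \<Rightarrow> real" where
  "Jpol M X Y0 Y1 \<pi> = (\<integral>w. \<pi> (X w) * (Y1 w - Y0 w) \<partial>M)"

definition policies :: "'x measure \<Rightarrow> ('x \<Rightarrow> real) set" where
  "policies Sx = {\<pi> \<in> borel_measurable Sx. \<forall>x\<in>space Sx. \<pi> x \<in> {-1, 1}}"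

text \<open>Surrogate risk of a utility function g: E[|psi| l(g(X), sign psi)]
  (a nonnegative integrand, so taken as a nonnegative Lebesgue integral).\<close>
definition surr_risk :: "'w measure \<Rightarrow> ('w \<Rightarrow> 'x) \<Rightarrow> ('w \<Rightarrow> real) \<Rightarrow> ('x \<Rightarrow> real) \<Rightarrow> ennreal" where
  "surr_risk M X \<psi> g = (\<integral>\<^sup>+ w. ennreal (\<bar>\<psi> w\<bar> * surr_loss (g (X w)) (sgnpm (\<psi> w))) \<partial>M)"

end

(* A minimiser G of the weighted logistic risk over all measurable functions satisfies the
   first-order condition E[|psi| (2 sigma(G(X)) - 1) | X] = E[psi | X], sigma the logistic function:
   perturb G by t on an event {X in B} and use the quadratic upper bound
   l(g + t, s) <= l(g, s) + t (2 sigma(g) - 1 - s) + t^2/4.  As |psi| (2 sigma(G) - 1) has the sign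
   of G, the sign of G(X) agrees almost surely with E[psi | X] = E[Y(1) - Y(-1) | X], so the policy
   sign G attains E |E[Y(1) - Y(-1) | X]|, which bounds J(pi) for every policy pi.  Correct
   specification makes each minimiser over Theta a minimiser over all measurable functions. *)

theory Submission
  imports Defs
begin

definition logistic :: "real \<Rightarrow> real" where
  "logistic g = exp g / (1 + exp g)"

lemma logistic_bounds: "0 < logistic g" "logistic g < 1"
  unfolding logistic_def by (simp_all add: add_pos_pos)

lemma two_logistic_minus_one: "2 * logistic g - 1 = (exp g - 1) / (exp g + 1)"
proof -
  have "exp g + 1 \<noteq> 0"
    using exp_gt_zero[of g] by linarith
  then show ?thesis
    unfolding logistic_def by (simp add: field_simps)
qed

lemma abs_two_logistic_minus_one_le: "\<bar>2 * logistic g - 1\<bar> \<le> 1"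
  using logistic_bounds[of g] by simp

lemma abs_mult_two_logistic_minus_one_le: "\<bar>\<bar>y\<bar> * (2 * logistic g - 1)\<bar> \<le> \<bar>y\<bar>"
  unfolding abs_mult by (simp add: mult_left_le abs_two_logistic_minus_one_le)

lemma abs_mult_two_logistic_minus_one_diff_le: "\<bar>\<bar>y\<bar> * (2 * logistic g - 1) - y\<bar> \<le> 2 * \<bar>y\<bar>"
  using abs_triangle_ineq4[of "\<bar>y\<bar> * (2 * logistic g - 1)" y] abs_mult_two_logistic_minus_one_le[of y g]
  by linarith

lemma sgnpm_mult_logistic_nonneg: "0 \<le> sgnpm g * (2 * logistic g - 1)"
  unfolding two_logistic_minus_one sgnpm_def
  by (auto intro!: divide_nonneg_pos divide_nonpos_pos simp: add_pos_pos)

lemma abs_mult_sgnpm: "\<bar>x\<bar> * sgnpm x = x"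
  unfolding sgnpm_def by simp

lemma sgnpm_in_pm1: "sgnpm x \<in> {-1, 1}"
  unfolding sgnpm_def by simp

text \<open>Hoeffding's lemma for a Bernoulli(a) variable; negative t is reduced to positive t by
  exchanging the roles of a and 1 - a.\<close>
lemma ln_bernoulli_mgf_le:
  fixes a t :: real
  assumes "0 \<le> a" "a \<le> 1"
  shows "ln (1 - a + a * exp t) \<le> a * t + t\<^sup>2 / 8"
proof (cases "t \<ge> 0")
  case True
  have "- t * a + ln (1 + a * (exp t - 1)) \<le> t\<^sup>2 / 8"
    using Hoeffdings_lemma_aux[OF True assms(1)] by simp
  then show ?thesis
    by (simp add: algebra_simps)
next
  case False
  have "1 \<le> exp (-t)" using False by simp
  then have pos: "0 < 1 + (1 - a) * (exp (-t) - 1)"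
    using assms by (intro add_pos_nonneg mult_nonneg_nonneg) simp_all
  have "1 - a + a * exp t = exp t * (1 + (1 - a) * (exp (-t) - 1))"
    by (simp add: algebra_simps exp_minus field_simps)
  then have "ln (1 - a + a * exp t) = t + ln (1 + (1 - a) * (exp (-t) - 1))"
    using pos by (simp add: ln_mult)
  moreover have "- (-t) * (1 - a) + ln (1 + (1 - a) * (exp (-t) - 1)) \<le> (-t)\<^sup>2 / 8"
    using Hoeffdings_lemma_aux[of "-t" "1 - a"] False assms by (simp only:)
  ultimately show ?thesis by (simp add: algebra_simps)
qed

lemma surr_loss_add_le:
  "surr_loss (g + t) s \<le> surr_loss g s + t * (2 * logistic g - 1 - s) + t\<^sup>2 / 4"
proof -
  define a where "a = logistic g"
  have a: "0 < a" "a < 1"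
    unfolding a_def using logistic_bounds[of g] by simp_all
  have pos_g: "0 < 1 + exp g"
    using exp_gt_zero[of g] by linarith
  have pos_a: "0 < 1 - a + a * exp t"
    using a by (intro add_pos_nonneg) auto
  have a_mult: "(1 + exp g) * a = exp g"
    using pos_g unfolding a_def logistic_def by simp
  have "(1 + exp g) * (1 - a + a * exp t) = (1 + exp g) - (1 + exp g) * a + (1 + exp g) * a * exp t"
    by (simp add: algebra_simps)
  also have "\<dots> = 1 + exp (g + t)"
    unfolding a_mult exp_add by simp
  finally have "ln (1 + exp (g + t)) = ln (1 + exp g) + ln (1 - a + a * exp t)"
    using ln_mult_pos[OF pos_g pos_a] by simp
  then show ?thesis
    using ln_bernoulli_mgf_le[of a t] a unfolding surr_loss_def a_def
    by (simp add: algebra_simps)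
qed

lemma surr_loss_nonneg:
  assumes "s \<in> {-1, 1}"
  shows "0 \<le> surr_loss g s"
proof -
  have "0 \<le> ln (1 + exp g)" by simp
  moreover have "g \<le> ln (1 + exp g)"
    using ln_exp[of g] ln_le_cancel_iff[of "exp g" "1 + exp g"] by (simp add: add_pos_pos)
  ultimately show ?thesis using assms unfolding surr_loss_def by auto
qed

lemma quadratic_nonneg_imp_linear_coeff_zero:
  fixes C D :: real
  assumes "\<And>t. 0 \<le> t * D + t\<^sup>2 * C"
  shows "D = 0"
proof (rule DERIV_local_min)
  show "((\<lambda>t. t * D + t\<^sup>2 * C) has_real_derivative D) (at 0)"
    by (auto intro!: derivative_eq_intros)
  show "\<forall>t. \<bar>0 - t\<bar> < 1 \<longrightarrow> 0 * D + 0\<^sup>2 * C \<le> t * D + t\<^sup>2 * C"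
    using assms by simp
qed simp

lemma borel_measurable_sgnpm[measurable]:
  assumes [measurable]: "f \<in> borel_measurable N"
  shows "(\<lambda>w. sgnpm (f w)) \<in> borel_measurable N"
  unfolding sgnpm_def by measurable

lemma borel_measurable_logistic[measurable]:
  assumes [measurable]: "f \<in> borel_measurable N"
  shows "(\<lambda>w. logistic (f w)) \<in> borel_measurable N"
  unfolding logistic_def by measurable

lemma borel_measurable_surr_loss[measurable]:
  assumes [measurable]: "f \<in> borel_measurable N" "s \<in> borel_measurable N"
  shows "(\<lambda>w. surr_loss (f w) (s w)) \<in> borel_measurable N"
  unfolding surr_loss_def by measurable

definition weighted_surr_loss :: "('w \<Rightarrow> 'x) \<Rightarrow> ('w \<Rightarrow> real) \<Rightarrow> ('x \<Rightarrow> real) \<Rightarrow> 'w \<Rightarrow> real" where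
  "weighted_surr_loss X \<psi> h w = \<bar>\<psi> w\<bar> * surr_loss (h (X w)) (sgnpm (\<psi> w))"

lemma surr_risk_weighted_surr_loss:
  "surr_risk M X \<psi> h = (\<integral>\<^sup>+w. ennreal (weighted_surr_loss X \<psi> h w) \<partial>M)"
  unfolding surr_risk_def weighted_surr_loss_def ..

lemma weighted_surr_loss_nonneg: "0 \<le> weighted_surr_loss X \<psi> h w"
  unfolding weighted_surr_loss_def using surr_loss_nonneg[OF sgnpm_in_pm1] by simp

lemma borel_measurable_weighted_surr_loss[measurable]:
  assumes [measurable]: "X \<in> measurable M Sx" "h \<in> borel_measurable Sx" "\<psi> \<in> borel_measurable M"
  shows "weighted_surr_loss X \<psi> h \<in> borel_measurable M"
  unfolding weighted_surr_loss_def[abs_def] by measurable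

lemma weighted_surr_loss_shift_le:
  "weighted_surr_loss X \<psi> (\<lambda>x. G x + t * indicator B x) w
     \<le> weighted_surr_loss X \<psi> G w
        + t * (indicator B (X w) * (\<bar>\<psi> w\<bar> * (2 * logistic (G (X w)) - 1) - \<psi> w))
        + t\<^sup>2 / 4 * \<bar>\<psi> w\<bar>"
proof (cases "X w \<in> B")
  case True
  have "\<bar>\<psi> w\<bar> * surr_loss (G (X w) + t) (sgnpm (\<psi> w))
      \<le> \<bar>\<psi> w\<bar> * (surr_loss (G (X w)) (sgnpm (\<psi> w))
           + t * (2 * logistic (G (X w)) - 1 - sgnpm (\<psi> w)) + t\<^sup>2 / 4)"
    by (rule mult_left_mono[OF surr_loss_add_le abs_ge_zero])
  then show ?thesis
    using True abs_mult_sgnpm[of "\<psi> w"] unfolding weighted_surr_loss_def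
    by (simp add: algebra_simps)
qed (simp add: weighted_surr_loss_def)

lemma surr_risk_le_integral:
  assumes "integrable M r" and "\<And>w. w \<in> space M \<Longrightarrow> weighted_surr_loss X \<psi> h w \<le> r w"
  shows "surr_risk M X \<psi> h \<le> ennreal (\<integral>w. r w \<partial>M)"
proof -
  have "AE w in M. 0 \<le> r w"
    using order_trans[OF weighted_surr_loss_nonneg assms(2)] by (intro AE_I2)
  have "surr_risk M X \<psi> h \<le> (\<integral>\<^sup>+w. ennreal (r w) \<partial>M)"
    unfolding surr_risk_weighted_surr_loss using assms(2) by (intro nn_integral_mono ennreal_leI)
  also have "\<dots> = ennreal (\<integral>w. r w \<partial>M)"
    using nn_integral_eq_integral[OF assms(1) \<open>AE w in M. 0 \<le> r w\<close>] .
  finally show ?thesis .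
qed

lemma surr_risk_finite_imp_integrable:
  assumes [measurable]: "X \<in> measurable M Sx" "h \<in> borel_measurable Sx" "\<psi> \<in> borel_measurable M"
    and "surr_risk M X \<psi> h < \<infinity>"
  shows "integrable M (weighted_surr_loss X \<psi> h)"
    and "surr_risk M X \<psi> h = ennreal (\<integral>w. weighted_surr_loss X \<psi> h w \<partial>M)"
proof -
  show int: "integrable M (weighted_surr_loss X \<psi> h)"
    using assms(4) weighted_surr_loss_nonneg unfolding surr_risk_weighted_surr_loss
    by (intro integrableI_nonneg AE_I2) auto
  show "surr_risk M X \<psi> h = ennreal (\<integral>w. weighted_surr_loss X \<psi> h w \<partial>M)"
    unfolding surr_risk_weighted_surr_loss
    by (intro nn_integral_eq_integral int AE_I2 weighted_surr_loss_nonneg)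
qed

lemma surr_risk_zero_finite:
  assumes "integrable M \<psi>"
  shows "surr_risk M X \<psi> (\<lambda>_. 0) < \<infinity>"
proof -
  have "surr_risk M X \<psi> (\<lambda>_. 0) \<le> ennreal (\<integral>w. 2 * ln 2 * \<bar>\<psi> w\<bar> \<partial>M)"
    by (rule surr_risk_le_integral) (use assms in \<open>simp_all add: weighted_surr_loss_def surr_loss_def\<close>)
  also have "\<dots> < \<infinity>"
    by simp
  finally show ?thesis .
qed

lemma surr_risk_minimizer_first_order:
  assumes [measurable]: "X \<in> measurable M Sx" "G \<in> borel_measurable Sx" "B \<in> sets Sx"
    and \<psi>: "integrable M \<psi>"
    and minimal: "\<And>h. h \<in> borel_measurable Sx \<Longrightarrow> surr_risk M X \<psi> G \<le> surr_risk M X \<psi> h"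
  shows "(\<integral>w. indicator B (X w) * (\<bar>\<psi> w\<bar> * (2 * logistic (G (X w)) - 1) - \<psi> w) \<partial>M) = 0"
proof -
  have \<psi>_meas[measurable]: "\<psi> \<in> borel_measurable M"
    using \<psi> by (rule borel_measurable_integrable)
  let ?loss = "weighted_surr_loss X \<psi> G"
  define d where "d w = indicator B (X w) * (\<bar>\<psi> w\<bar> * (2 * logistic (G (X w)) - 1) - \<psi> w)" for w
  have "surr_risk M X \<psi> G \<le> surr_risk M X \<psi> (\<lambda>_. 0)"
    by (rule minimal) simp
  also have "\<dots> < \<infinity>"
    using \<psi> by (rule surr_risk_zero_finite)
  finally have "surr_risk M X \<psi> G < \<infinity>" .
  note risk_G = surr_risk_finite_imp_integrable[OF assms(1,2) \<psi>_meas this]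
  have d_int: "integrable M d"
  proof (rule Bochner_Integration.integrable_bound)
    show "integrable M (\<lambda>w. 2 * \<bar>\<psi> w\<bar>)"
      using \<psi> by simp
    show "d \<in> borel_measurable M"
      unfolding d_def by measurable
    show "AE w in M. norm (d w) \<le> norm (2 * \<bar>\<psi> w\<bar>)"
      using abs_mult_two_logistic_minus_one_diff_le unfolding d_def indicator_def by simp
  qed
  have "0 \<le> t * (\<integral>w. d w \<partial>M) + t\<^sup>2 * ((\<integral>w. \<bar>\<psi> w\<bar> \<partial>M) / 4)" for t
  proof -
    define r where "r w = ?loss w + t * d w + t\<^sup>2 / 4 * \<bar>\<psi> w\<bar>" for w
    have bound: "weighted_surr_loss X \<psi> (\<lambda>x. G x + t * indicator B x) w \<le> r w" for w
      unfolding r_def d_def by (rule weighted_surr_loss_shift_le)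
    have r_int: "integrable M r"
      unfolding r_def using risk_G(1) d_int \<psi> by simp
    have "surr_risk M X \<psi> G \<le> surr_risk M X \<psi> (\<lambda>x. G x + t * indicator B x)"
      by (rule minimal) measurable
    also have "\<dots> \<le> ennreal (\<integral>w. r w \<partial>M)"
      using r_int bound by (rule surr_risk_le_integral)
    finally have "(\<integral>w. ?loss w \<partial>M) \<le> (\<integral>w. r w \<partial>M)"
      using order_trans[OF weighted_surr_loss_nonneg bound]
      by (simp add: risk_G(2) ennreal_le_iff integral_nonneg_AE)
    also have "\<dots> = (\<integral>w. ?loss w \<partial>M) + t * (\<integral>w. d w \<partial>M) + t\<^sup>2 * ((\<integral>w. \<bar>\<psi> w\<bar> \<partial>M) / 4)"
      unfolding r_def using risk_G(1) d_int \<psi> by simp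
    finally show ?thesis by simp
  qed
  then show ?thesis
    unfolding d_def by (rule quadratic_nonneg_imp_linear_coeff_zero)
qed

context sigma_finite_subalgebra
begin

lemma AE_sign_mult_real_cond_exp_eq_abs:
  assumes [measurable]: "s \<in> borel_measurable F" and s: "\<And>x. x \<in> space M \<Longrightarrow> \<bar>s x\<bar> = 1"
    and e: "integrable M e" and se: "\<And>x. x \<in> space M \<Longrightarrow> 0 \<le> s x * e x"
  shows "AE x in M. s x * real_cond_exp M F e x = \<bar>real_cond_exp M F e x\<bar>"
proof -
  have e_meas[measurable]: "e \<in> borel_measurable M"
    using e by (rule borel_measurable_integrable)
  have [measurable]: "s \<in> borel_measurable M"
    using measurable_from_subalg[OF subalg assms(1)] .
  have se_int: "integrable M (\<lambda>x. s x * e x)"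
  proof (rule Bochner_Integration.integrable_bound[OF e])
    show "(\<lambda>x. s x * e x) \<in> borel_measurable M"
      by measurable
    show "AE x in M. norm (s x * e x) \<le> norm (e x)"
      by (rule AE_I2) (simp add: abs_mult s)
  qed
  have "AE x in M. real_cond_exp M F (\<lambda>x. s x * e x) x = s x * real_cond_exp M F e x"
    using assms(1) e_meas se_int by (rule real_cond_exp_mult)
  moreover have "AE x in M. 0 \<le> real_cond_exp M F (\<lambda>x. s x * e x) x"
  proof (rule real_cond_exp_pos)
    show "AE x in M. 0 \<le> s x * e x"
      by (rule AE_I2) (rule se)
  qed measurable
  ultimately show ?thesis
    using AE_space
  proof eventually_elim
    case (elim x)
    then have "s x = 1 \<or> s x = -1"
      using s[of x] by arith
    then show ?case
      using elim by auto
  qed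
qed

lemma integral_mult_real_cond_exp:
  assumes [measurable]: "s \<in> borel_measurable F" and s: "\<And>x. x \<in> space M \<Longrightarrow> \<bar>s x\<bar> \<le> 1"
    and f: "integrable M f"
  shows "integrable M (\<lambda>x. s x * real_cond_exp M F f x)"
    and "(\<integral>x. s x * f x \<partial>M) = (\<integral>x. s x * real_cond_exp M F f x \<partial>M)"
proof -
  have f_meas[measurable]: "f \<in> borel_measurable M"
    using f by (rule borel_measurable_integrable)
  have [measurable]: "s \<in> borel_measurable M"
    using measurable_from_subalg[OF subalg assms(1)] .
  have "integrable M (\<lambda>x. s x * f x)"
  proof (rule Bochner_Integration.integrable_bound[OF f])
    show "(\<lambda>x. s x * f x) \<in> borel_measurable M"
      by measurable
    show "AE x in M. norm (s x * f x) \<le> norm (f x)"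
      by (rule AE_I2) (simp add: abs_mult mult_left_le_one_le s)
  qed
  note intg = real_cond_exp_intg[OF this assms(1) f_meas]
  show "integrable M (\<lambda>x. s x * real_cond_exp M F f x)"
    by (rule intg(1))
  show "(\<integral>x. s x * f x \<partial>M) = (\<integral>x. s x * real_cond_exp M F f x \<partial>M)"
    by (rule intg(2)[symmetric])
qed

lemma integral_mult_le_integral_abs_real_cond_exp:
  assumes "s \<in> borel_measurable F" and s: "\<And>x. x \<in> space M \<Longrightarrow> \<bar>s x\<bar> \<le> 1"
    and "integrable M f"
  shows "(\<integral>x. s x * f x \<partial>M) \<le> (\<integral>x. \<bar>real_cond_exp M F f x\<bar> \<partial>M)"
proof -
  have "(\<integral>x. s x * f x \<partial>M) = (\<integral>x. s x * real_cond_exp M F f x \<partial>M)"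
    using integral_mult_real_cond_exp(2)[OF assms] .
  also have "\<dots> \<le> (\<integral>x. \<bar>real_cond_exp M F f x\<bar> \<partial>M)"
  proof (rule integral_mono)
    show "integrable M (\<lambda>x. s x * real_cond_exp M F f x)"
      using integral_mult_real_cond_exp(1)[OF assms] .
    show "integrable M (\<lambda>x. \<bar>real_cond_exp M F f x\<bar>)"
      using \<open>integrable M f\<close> by auto
    fix x assume "x \<in> space M"
    then have "\<bar>s x * real_cond_exp M F f x\<bar> \<le> \<bar>real_cond_exp M F f x\<bar>"
      using s by (simp add: abs_mult mult_left_le_one_le)
    then show "s x * real_cond_exp M F f x \<le> \<bar>real_cond_exp M F f x\<bar>"
      by linarith
  qed
  finally show ?thesis .
qed

lemma integral_mult_eq_integral_abs_real_cond_exp: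
  assumes "s \<in> borel_measurable F" and "\<And>x. x \<in> space M \<Longrightarrow> \<bar>s x\<bar> \<le> 1"
    and "integrable M f"
    and "AE x in M. s x * real_cond_exp M F f x = \<bar>real_cond_exp M F f x\<bar>"
  shows "(\<integral>x. s x * f x \<partial>M) = (\<integral>x. \<bar>real_cond_exp M F f x\<bar> \<partial>M)"
proof -
  have [measurable]: "s \<in> borel_measurable M"
    using measurable_from_subalg[OF subalg assms(1)] .
  have "(\<integral>x. s x * f x \<partial>M) = (\<integral>x. s x * real_cond_exp M F f x \<partial>M)"
    using integral_mult_real_cond_exp(2)[OF assms(1-3)] .
  also have "\<dots> = (\<integral>x. \<bar>real_cond_exp M F f x\<bar> \<partial>M)"
    using assms(4) by (intro integral_cong_AE) auto
  finally show ?thesis .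
qed

end

lemma finite_measure_subalgebra_sigmaX:
  assumes "finite_measure M" and "X \<in> measurable M Sx"
  shows "finite_measure_subalgebra M (sigmaX M X Sx)"
proof -
  have "subalgebra M (sigmaX M X Sx)"
    unfolding subalgebra_def sigmaX_def using sets_image_in_sets[OF refl assms(2)] by simp
  then show ?thesis
    using assms(1) by (simp add: finite_measure_subalgebra_def finite_measure_subalgebra_axioms_def)
qed

lemma borel_measurable_comp_sigmaX:
  assumes "X \<in> measurable M Sx" and "f \<in> borel_measurable Sx"
  shows "(\<lambda>w. f (X w)) \<in> borel_measurable (sigmaX M X Sx)"
proof -
  have "X \<in> space M \<rightarrow> space Sx"
    using assms(1) by (simp add: measurable_def)
  from measurable_compose[OF measurable_vimage_algebra1[OF this] assms(2)]
  show ?thesis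
    unfolding sigmaX_def .
qed

lemma integrable_abs_mult_two_logistic_minus_one:
  assumes [measurable]: "X \<in> measurable M Sx" "G \<in> borel_measurable Sx"
    and \<psi>: "integrable M \<psi>"
  shows "integrable M (\<lambda>w. \<bar>\<psi> w\<bar> * (2 * logistic (G (X w)) - 1))"
proof (rule Bochner_Integration.integrable_bound[OF \<psi>])
  have [measurable]: "\<psi> \<in> borel_measurable M"
    using \<psi> by (rule borel_measurable_integrable)
  show "(\<lambda>w. \<bar>\<psi> w\<bar> * (2 * logistic (G (X w)) - 1)) \<in> borel_measurable M"
    by measurable
  show "AE w in M. norm (\<bar>\<psi> w\<bar> * (2 * logistic (G (X w)) - 1)) \<le> norm (\<psi> w)"
    using abs_mult_two_logistic_minus_one_le by simp
qed

lemma surr_risk_minimizer_cond_exp: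
  assumes "finite_measure M"
    and [measurable]: "X \<in> measurable M Sx" "G \<in> borel_measurable Sx"
    and \<psi>: "integrable M \<psi>"
    and minimal: "\<And>h. h \<in> borel_measurable Sx \<Longrightarrow> surr_risk M X \<psi> G \<le> surr_risk M X \<psi> h"
  shows "AE w in M. real_cond_exp M (sigmaX M X Sx) \<psi> w
           = real_cond_exp M (sigmaX M X Sx) (\<lambda>w. \<bar>\<psi> w\<bar> * (2 * logistic (G (X w)) - 1)) w"
proof -
  let ?F = "sigmaX M X Sx" and ?e = "\<lambda>w. \<bar>\<psi> w\<bar> * (2 * logistic (G (X w)) - 1)"
  interpret finite_measure_subalgebra M ?F
    using finite_measure_subalgebra_sigmaX[OF assms(1,2)] .
  have e_int: "integrable M ?e"
    using integrable_abs_mult_two_logistic_minus_one[OF assms(2,3) \<psi>] .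
  show ?thesis
  proof (rule real_cond_exp_charact)
    fix A assume A_F: "A \<in> sets ?F"
    then obtain B where B[measurable]: "B \<in> sets Sx" and A: "A = X -` B \<inter> space M"
      using sets_vimage_algebra2[of X "space M" Sx] measurable_space[OF assms(2)]
      unfolding sigmaX_def by blast
    have A_M: "A \<in> sets M"
      using A_F subalg by (auto simp: subalgebra_def)
    have "(\<integral>w. indicator A w * ?e w \<partial>M) - (\<integral>w. indicator A w * \<psi> w \<partial>M)
        = (\<integral>w. indicator A w * (?e w - \<psi> w) \<partial>M)"
      using integrable_mult_indicator[OF A_M e_int] integrable_mult_indicator[OF A_M \<psi>]
      by (simp add: right_diff_distrib)
    also have "\<dots> = (\<integral>w. indicator B (X w) * (?e w - \<psi> w) \<partial>M)"
      by (rule Bochner_Integration.integral_cong) (simp_all add: A indicator_def)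
    also have "\<dots> = 0"
      by (rule surr_risk_minimizer_first_order[OF assms(2,3) B \<psi>]) (rule minimal)
    finally have "(\<integral>w\<in>A. \<psi> w \<partial>M) = (\<integral>w\<in>A. ?e w \<partial>M)"
      unfolding set_lebesgue_integral_def by simp
    also have "\<dots> = (\<integral>w\<in>A. real_cond_exp M ?F ?e w \<partial>M)"
      using real_cond_exp_intA[OF e_int A_F] .
    finally show "(\<integral>w\<in>A. \<psi> w \<partial>M) = (\<integral>w\<in>A. real_cond_exp M ?F ?e w \<partial>M)" .
  next
    show "integrable M (real_cond_exp M ?F ?e)"
      using e_int by (rule real_cond_exp_int(1))
    show "real_cond_exp M ?F ?e \<in> borel_measurable ?F"
      by (rule borel_measurable_cond_exp)
  qed (rule \<psi>)
qed

lemma surr_risk_minimizer_sign_cond_exp: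
  assumes "finite_measure M"
    and [measurable]: "X \<in> measurable M Sx" "G \<in> borel_measurable Sx"
    and \<psi>: "integrable M \<psi>"
    and minimal: "\<And>h. h \<in> borel_measurable Sx \<Longrightarrow> surr_risk M X \<psi> G \<le> surr_risk M X \<psi> h"
  shows "AE w in M. sgnpm (G (X w)) * real_cond_exp M (sigmaX M X Sx) \<psi> w
                    = \<bar>real_cond_exp M (sigmaX M X Sx) \<psi> w\<bar>"
proof -
  let ?F = "sigmaX M X Sx" and ?e = "\<lambda>w. \<bar>\<psi> w\<bar> * (2 * logistic (G (X w)) - 1)"
  interpret finite_measure_subalgebra M ?F
    using finite_measure_subalgebra_sigmaX[OF assms(1,2)] .
  have "AE w in M. sgnpm (G (X w)) * real_cond_exp M ?F ?e w = \<bar>real_cond_exp M ?F ?e w\<bar>"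
  proof (rule AE_sign_mult_real_cond_exp_eq_abs)
    show "(\<lambda>w. sgnpm (G (X w))) \<in> borel_measurable ?F"
      using borel_measurable_comp_sigmaX[OF assms(2) borel_measurable_sgnpm[OF assms(3)]] .
    show "\<bar>sgnpm (G (X w))\<bar> = 1" for w
      by (simp add: sgnpm_def)
    show "0 \<le> sgnpm (G (X w)) * ?e w" for w
      using sgnpm_mult_logistic_nonneg[of "G (X w)"] by (simp add: mult.left_commute)
    show "integrable M ?e"
      using integrable_abs_mult_two_logistic_minus_one[OF assms(2,3) \<psi>] .
  qed
  moreover have "AE w in M. real_cond_exp M ?F \<psi> w = real_cond_exp M ?F ?e w"
    by (rule surr_risk_minimizer_cond_exp[OF assms(1-4)]) (rule minimal)
  ultimately show ?thesis
    by eventually_elim simp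
qed

lemma policy_comp_sigmaX:
  assumes "X \<in> measurable M Sx" and "\<pi> \<in> policies Sx"
  shows "(\<lambda>w. \<pi> (X w)) \<in> borel_measurable (sigmaX M X Sx)"
    and "\<And>w. w \<in> space M \<Longrightarrow> \<bar>\<pi> (X w)\<bar> \<le> 1"
proof -
  show "(\<lambda>w. \<pi> (X w)) \<in> borel_measurable (sigmaX M X Sx)"
    using assms(2) unfolding policies_def by (intro borel_measurable_comp_sigmaX[OF assms(1)]) simp
  fix w assume "w \<in> space M"
  then have "\<pi> (X w) \<in> {-1, 1}"
    using assms measurable_space[OF assms(1)] unfolding policies_def by blast
  then show "\<bar>\<pi> (X w)\<bar> \<le> 1"
    by auto
qed

lemma Jpol_le_integral_abs_cond_exp:
  assumes "finite_measure M" "X \<in> measurable M Sx" "integrable M (\<lambda>w. Y1 w - Y0 w)"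
    and "\<pi> \<in> policies Sx"
  shows "Jpol M X Y0 Y1 \<pi> \<le> (\<integral>w. \<bar>real_cond_exp M (sigmaX M X Sx) (\<lambda>w. Y1 w - Y0 w) w\<bar> \<partial>M)"
proof -
  interpret finite_measure_subalgebra M "sigmaX M X Sx"
    using finite_measure_subalgebra_sigmaX[OF assms(1,2)] .
  show ?thesis
    unfolding Jpol_def
    using integral_mult_le_integral_abs_real_cond_exp[OF policy_comp_sigmaX[OF assms(2,4)] assms(3)] .
qed

lemma Jpol_eq_integral_abs_cond_exp:
  assumes "finite_measure M" "X \<in> measurable M Sx" "integrable M (\<lambda>w. Y1 w - Y0 w)"
    and "\<pi> \<in> policies Sx"
    and "AE w in M. \<pi> (X w) * real_cond_exp M (sigmaX M X Sx) (\<lambda>w. Y1 w - Y0 w) w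
                    = \<bar>real_cond_exp M (sigmaX M X Sx) (\<lambda>w. Y1 w - Y0 w) w\<bar>"
  shows "Jpol M X Y0 Y1 \<pi> = (\<integral>w. \<bar>real_cond_exp M (sigmaX M X Sx) (\<lambda>w. Y1 w - Y0 w) w\<bar> \<partial>M)"
proof -
  interpret finite_measure_subalgebra M "sigmaX M X Sx"
    using finite_measure_subalgebra_sigmaX[OF assms(1,2)] .
  show ?thesis
    unfolding Jpol_def
    using integral_mult_eq_integral_abs_real_cond_exp[OF policy_comp_sigmaX[OF assms(2,4)] assms(3,5)] .
qed

theorem theorem1:
  fixes M :: "'w measure" and Sx :: "'x measure"
    and X :: "'w \<Rightarrow> 'x" and T Y Y0 Y1 \<psi> :: "'w \<Rightarrow> real"
    and \<Theta> :: "(real ^ 'd) set" and g :: "real ^ 'd \<Rightarrow> 'x \<Rightarrow> real"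
  assumes "prob_space M"
    and X_meas: "X \<in> measurable M Sx"
    and T_meas: "T \<in> borel_measurable M" and T_vals: "\<forall>w\<in>space M. T w \<in> {-1, 1}"
    and Y0_meas: "Y0 \<in> borel_measurable M" and Y1_meas: "Y1 \<in> borel_measurable M"
    and Y_def: "\<forall>w\<in>space M. Y w = (if T w = 1 then Y1 w else Y0 w)"
    and unconf0: "cond_indep M (sigmaX M X Sx) Y0 T"
    and unconf1: "cond_indep M (sigmaX M X Sx) Y1 T"
    and int_tau: "integrable M (\<lambda>w. Y1 w - Y0 w)"
    and psi_obs: "\<exists>\<Psi>. \<Psi> \<in> borel_measurable (Sx \<Otimes>\<^sub>M borel \<Otimes>\<^sub>M borel)
                     \<and> (\<forall>w\<in>space M. \<psi> w = \<Psi> (X w, T w, Y w))"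
    and A1_int: "integrable M \<psi>"
    and A1_cond: "AE w in M. real_cond_exp M (sigmaX M X Sx) \<psi> w
                             = real_cond_exp M (sigmaX M X Sx) (\<lambda>w. Y1 w - Y0 w) w"
    and g_meas: "\<forall>\<theta>\<in>\<Theta>. g \<theta> \<in> borel_measurable Sx"
    and well_spec: "\<exists>\<theta>\<in>\<Theta>. \<forall>h\<in>borel_measurable Sx.
                      surr_risk M X \<psi> (g \<theta>) \<le> surr_risk M X \<psi> h"
    and th_in: "\<theta>s \<in> \<Theta>"
    and th_min: "\<forall>\<theta>\<in>\<Theta>. surr_risk M X \<psi> (g \<theta>s) \<le> surr_risk M X \<psi> (g \<theta>)"
  shows "Jpol M X Y0 Y1 (\<lambda>x. sgnpm (g \<theta>s x))
           = (SUP \<pi>\<in>policies Sx. Jpol M X Y0 Y1 \<pi>)"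
proof -
  interpret prob_space M by fact
  have G_meas: "g \<theta>s \<in> borel_measurable Sx"
    using g_meas th_in by blast
  have G_min: "surr_risk M X \<psi> (g \<theta>s) \<le> surr_risk M X \<psi> h" if "h \<in> borel_measurable Sx" for h
    using well_spec th_min that by (meson order_trans)
  have G_policy: "(\<lambda>x. sgnpm (g \<theta>s x)) \<in> policies Sx"
    unfolding policies_def using G_meas sgnpm_in_pm1 by (simp add: borel_measurable_sgnpm)
  have "AE w in M. sgnpm (g \<theta>s (X w)) * real_cond_exp M (sigmaX M X Sx) \<psi> w
                   = \<bar>real_cond_exp M (sigmaX M X Sx) \<psi> w\<bar>"
    by (rule surr_risk_minimizer_sign_cond_exp[OF finite_measure_axioms X_meas G_meas A1_int]) (rule G_min)
  with A1_cond have "AE w in M. sgnpm (g \<theta>s (X w)) * real_cond_exp M (sigmaX M X Sx) (\<lambda>w. Y1 w - Y0 w) w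
                   = \<bar>real_cond_exp M (sigmaX M X Sx) (\<lambda>w. Y1 w - Y0 w) w\<bar>"
    by eventually_elim simp
  then have J_G: "Jpol M X Y0 Y1 (\<lambda>x. sgnpm (g \<theta>s x))
      = (\<integral>w. \<bar>real_cond_exp M (sigmaX M X Sx) (\<lambda>w. Y1 w - Y0 w) w\<bar> \<partial>M)"
    by (rule Jpol_eq_integral_abs_cond_exp[OF finite_measure_axioms X_meas int_tau G_policy])
  show ?thesis
  proof (rule cSup_eq_maximum[symmetric])
    show "Jpol M X Y0 Y1 (\<lambda>x. sgnpm (g \<theta>s x)) \<in> Jpol M X Y0 Y1 ` policies Sx"
      using G_policy by (rule imageI)
    show "y \<le> Jpol M X Y0 Y1 (\<lambda>x. sgnpm (g \<theta>s x))" if "y \<in> Jpol M X Y0 Y1 ` policies Sx" for y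
      using that J_G Jpol_le_integral_abs_cond_exp[OF finite_measure_axioms X_meas int_tau] by auto
  qed
qed

end
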